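(* Let $\nu\in\mathbb{Z}_{\ge0}\cup\{\infty\}$ be a changepoint, $T$ a random sequence length and $\tau$ the detection time of an online changepoint detector; let $\Delta\tau:=\tau-\nu$ and $\Delta T:=T-\nu$. Assume (independent censoring) that conditionally on $\{\nu<\infty,\ \Delta\tau\ge0\}$, $\Delta\tau$ and $\Delta T$ are independent, and that $M_\infty:=\mathbb{E}[\Delta\tau\mid\Delta\tau\ge0,\ \nu<\infty]<\infty$. Let $S^{\mathrm{ADD}}(t):=P(\Delta\tau>t\mid\Delta\tau\ge0,\nu<\infty)$, let $\Delta T^*_{\max}:=\inf\{t\mid P(\Delta T\le t)=1\}$ (assumed finite), and set $$M^{(\mathrm{KM})}_T:=\int_0^{\Delta T^*_{\max}}S^{\mathrm{ADD}}(t)\,dt,\qquad M^{(\mathrm{LB})}_T:=\mathbb{E}[\Delta\tau\mid\nu<\infty,\ 0\le\Delta\tau\le\Delta T],$$ $\mathcal{B}_{\mathrm{TR}}(\hat M^{(\mathrm{KM})}_T):=M^{(\mathrm{KM})}_T-M_\infty$ and $\mathcal{B}_{\mathrm{TR}}(\hat M^{(\mathrm{LB})}_T):=M^{(\mathrm{LB})}_T-M_\infty$. Then $$\mathcal{B}_{\mathrm{TR}}(\hat M^{(\mathrm{LB})}_T)\le\mathcal{B}_{\mathrm{TR}}(\hat M^{(\mathrm{KM})}_T)\le0.$$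
   Context: Setting: a sequence has frames drawn from a pre-change density before the changepoint $\nu$ and a post-change density from $\nu$ on; $\nu$ and $T$ are independent of the observations. $M_\infty$ is the average detection delay (ADD). $M^{(\mathrm{KM})}_T$ is the population version of the KM-ADD estimator with upper limit $b=\Delta T^*_{\max}$, and $M^{(\mathrm{LB})}_T$ the population version of the conventional estimator averaging delays only over sequences whose detection occurs within the sequence. *)

theory Defs
  imports "HOL-Probability.Probability"
begin

text \<open>Changepoint nu (possibly infinite), detection time tau (possibly infinite,
i.e. no detection), sequence length T.  All are random variables on M.\<close>

definition cp_event :: "'a measure \<Rightarrow> ('a \<Rightarrow> bool) \<Rightarrow> 'a set" where
  "cp_event M P = {\<omega> \<in> space M. P \<omega>}"

definition cprob :: "'a measure \<Rightarrow> ('a \<Rightarrow> bool) \<Rightarrow> ('a \<Rightarrow> bool) \<Rightarrow> real" where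
  "cprob M A B = measure M (cp_event M (\<lambda>\<omega>. A \<omega> \<and> B \<omega>)) / measure M (cp_event M A)"

definition dtau :: "('a \<Rightarrow> enat) \<Rightarrow> ('a \<Rightarrow> enat) \<Rightarrow> 'a \<Rightarrow> enat" where
  "dtau nu tau \<omega> = tau \<omega> - nu \<omega>"

text \<open>Delta T = T - nu (integer; meaningful when nu is finite).\<close>
definition dT :: "('a \<Rightarrow> enat) \<Rightarrow> ('a \<Rightarrow> nat) \<Rightarrow> 'a \<Rightarrow> int" where
  "dT nu T \<omega> = int (T \<omega>) - int (the_enat (nu \<omega>))"

definition condA :: "('a \<Rightarrow> enat) \<Rightarrow> ('a \<Rightarrow> enat) \<Rightarrow> 'a \<Rightarrow> bool" where
  "condA nu tau \<omega> \<longleftrightarrow> nu \<omega> \<noteq> \<infinity> \<and> nu \<omega> \<le> tau \<omega>"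

definition ADD_enn :: "'a measure \<Rightarrow> ('a \<Rightarrow> enat) \<Rightarrow> ('a \<Rightarrow> enat) \<Rightarrow> ennreal" where
  "ADD_enn M nu tau =
     (\<integral>\<^sup>+\<omega>. indicator (cp_event M (condA nu tau)) \<omega> * ennreal_of_enat (dtau nu tau \<omega>) \<partial>M)
       / emeasure M (cp_event M (condA nu tau))"

definition M_inf :: "'a measure \<Rightarrow> ('a \<Rightarrow> enat) \<Rightarrow> ('a \<Rightarrow> enat) \<Rightarrow> real" where
  "M_inf M nu tau = enn2real (ADD_enn M nu tau)"

definition S_ADD :: "'a measure \<Rightarrow> ('a \<Rightarrow> enat) \<Rightarrow> ('a \<Rightarrow> enat) \<Rightarrow> real \<Rightarrow> real" where
  "S_ADD M nu tau t = cprob M (condA nu tau)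
      (\<lambda>\<omega>. dtau nu tau \<omega> = \<infinity> \<or> t < real (the_enat (dtau nu tau \<omega>)))"

text \<open>Delta T*_max = inf {t | P(Delta T <= t) = 1}, where Delta T is only defined
  on {nu < infinity}: P(nu < infinity and Delta T > t) = 0.\<close>
definition dT_max :: "'a measure \<Rightarrow> ('a \<Rightarrow> enat) \<Rightarrow> ('a \<Rightarrow> nat) \<Rightarrow> real" where
  "dT_max M nu T = Inf {t::real. prob_space.prob M
      (cp_event M (\<lambda>\<omega>. nu \<omega> \<noteq> \<infinity> \<and> t < real_of_int (dT nu T \<omega>))) = 0}"

definition M_KM :: "'a measure \<Rightarrow> ('a \<Rightarrow> enat) \<Rightarrow> ('a \<Rightarrow> enat) \<Rightarrow> ('a \<Rightarrow> nat) \<Rightarrow> real" where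
  "M_KM M nu tau T = (LINT t:{0..dT_max M nu T}|lborel. S_ADD M nu tau t)"

definition condLB :: "('a \<Rightarrow> enat) \<Rightarrow> ('a \<Rightarrow> enat) \<Rightarrow> ('a \<Rightarrow> nat) \<Rightarrow> 'a \<Rightarrow> bool" where
  "condLB nu tau T \<omega> \<longleftrightarrow> condA nu tau \<omega> \<and> dtau nu tau \<omega> \<noteq> \<infinity> \<and>
      int (the_enat (dtau nu tau \<omega>)) \<le> dT nu T \<omega>"

definition M_LB :: "'a measure \<Rightarrow> ('a \<Rightarrow> enat) \<Rightarrow> ('a \<Rightarrow> enat) \<Rightarrow> ('a \<Rightarrow> nat) \<Rightarrow> real" where
  "M_LB M nu tau T =
     (LINT \<omega>:cp_event M (condLB nu tau T)|M. real (the_enat (dtau nu tau \<omega>)))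
       / measure M (cp_event M (condLB nu tau T))"

definition bias_KM where "bias_KM M nu tau T = M_KM M nu tau T - M_inf M nu tau"
definition bias_LB where "bias_LB M nu tau T = M_LB M nu tau T - M_inf M nu tau"

end

theory Submission
  imports Defs
begin

(* Write A = {nu < \<infinity>, \<Delta>\<tau> \<ge> 0}, L = {0 \<le> \<Delta>\<tau> \<le> \<Delta>T} \<subseteq> A and b = \<Delta>T*_max.
   Finiteness of M_\<infinity> forces \<Delta>\<tau> < \<infinity> almost surely on A.  By the layer-cake formula,
   P(A) M_KM = E[min(\<Delta>\<tau>, b); A] \<le> E[\<Delta>\<tau>; A] = P(A) M_\<infinity>.  Since b is the essential supremum
   of \<Delta>T, almost surely \<Delta>\<tau> \<le> \<Delta>T \<le> b on L, hence E[\<Delta>\<tau>; L] = \<integral>_0^b P(L, \<Delta>\<tau> > t) dt.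
   Independent censoring gives P(L, \<Delta>\<tau> > t) P(A) \<le> P(A, \<Delta>\<tau> > t) P(L) for every t, and
   integrating over [0, b] yields M_LB \<le> M_KM. *)

lemma measurable_compose_countable2:
  fixes f :: "'i::countable \<Rightarrow> 'j::countable \<Rightarrow> 'b"
  assumes "g \<in> M \<rightarrow>\<^sub>M count_space UNIV" "h \<in> M \<rightarrow>\<^sub>M count_space UNIV"
    and "\<And>i j. f i j \<in> space N"
  shows "(\<lambda>\<omega>. f (g \<omega>) (h \<omega>)) \<in> M \<rightarrow>\<^sub>M N"
proof (rule measurable_compose_countable[where f="\<lambda>i \<omega>. f i (h \<omega>)", OF _ assms(1)])
  show "(\<lambda>\<omega>. f i (h \<omega>)) \<in> M \<rightarrow>\<^sub>M N" for i
    by (rule measurable_compose_countable[where f="\<lambda>j \<omega>. f i j", OF _ assms(2)])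
      (simp add: assms(3))
qed

lemma cp_event_conj: "cp_event M (\<lambda>\<omega>. P \<omega> \<and> Q \<omega>) = cp_event M P \<inter> cp_event M Q"
  by (auto simp: cp_event_def)

lemma cp_event_measurable[measurable]: "Measurable.pred M P \<Longrightarrow> cp_event M P \<in> sets M"
  by (simp add: cp_event_def pred_def)

lemma set_integral_eq_enn2real_set_nn_integral:
  fixes f :: "'a \<Rightarrow> real"
  assumes "f \<in> borel_measurable M" "\<And>x. 0 \<le> f x" "A \<in> sets M"
  shows "(LINT x:A|M. f x) = enn2real (\<integral>\<^sup>+x\<in>A. ennreal (f x) \<partial>M)"
proof -
  have "(LINT x:A|M. f x) = enn2real (\<integral>\<^sup>+x. ennreal (indicator A x *\<^sub>R f x) \<partial>M)"
    unfolding set_lebesgue_integral_def using assms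
    by (intro integral_eq_nn_integral) auto
  also have "(\<integral>\<^sup>+x. ennreal (indicator A x *\<^sub>R f x) \<partial>M) = (\<integral>\<^sup>+x\<in>A. ennreal (f x) \<partial>M)"
    by (intro nn_integral_cong) (simp split: split_indicator)
  finally show ?thesis .
qed

lemma borel_measurable_antimono:
  fixes f :: "real \<Rightarrow> real"
  assumes "antimono f"
  shows "f \<in> borel_measurable borel"
proof -
  have "mono (\<lambda>t. - f t)"
    using assms by (simp add: mono_def antimono_def)
  then have "(\<lambda>t. - (- f t)) \<in> borel_measurable borel"
    by (intro borel_measurable_uminus borel_measurable_mono)
  then show ?thesis
    by simp
qed

lemma (in sigma_finite_measure) layer_cake_min:
  fixes x :: "'a \<Rightarrow> real" and b :: real
  assumes [measurable]: "E \<in> sets M" "x \<in> borel_measurable M" and x_nonneg: "\<And>\<omega>. 0 \<le> x \<omega>"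
  shows "(\<integral>\<^sup>+t\<in>{0..b}. emeasure M {\<omega>\<in>E. t < x \<omega>} \<partial>lborel)
       = (\<integral>\<^sup>+\<omega>\<in>E. ennreal (min (x \<omega>) b) \<partial>M)"
proof -
  interpret pair_sigma_finite lborel M
    by (intro pair_sigma_finite.intro lborel.sigma_finite_measure_axioms sigma_finite_measure_axioms)
  define S where "S = {(t, \<omega>). t \<in> {0..b} \<and> \<omega> \<in> E \<and> t < x \<omega>}"
  have "Measurable.pred (lborel \<Otimes>\<^sub>M M) (\<lambda>(t, \<omega>). t \<in> {0..b} \<and> \<omega> \<in> E \<and> t < x \<omega>)"
    by measurable
  then have [measurable]: "(\<lambda>p. indicator S p :: ennreal) \<in> borel_measurable (lborel \<Otimes>\<^sub>M M)"
    unfolding S_def indicator_def by (simp add: case_prod_beta')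
  have [measurable]: "{\<omega>\<in>E. t < x \<omega>} \<in> sets M" for t
    by measurable
  have "(\<integral>\<^sup>+t\<in>{0..b}. emeasure M {\<omega>\<in>E. t < x \<omega>} \<partial>lborel)
      = (\<integral>\<^sup>+t. \<integral>\<^sup>+\<omega>. indicator S (t, \<omega>) \<partial>M \<partial>lborel)"
  proof (intro nn_integral_cong)
    fix t
    have "(\<lambda>\<omega>. indicator S (t, \<omega>) :: ennreal) = (\<lambda>\<omega>. indicator {0..b} t * indicator {\<omega>\<in>E. t < x \<omega>} \<omega>)"
      by (auto simp: S_def split: split_indicator)
    then show "emeasure M {\<omega>\<in>E. t < x \<omega>} * indicator {0..b} t = (\<integral>\<^sup>+\<omega>. indicator S (t, \<omega>) \<partial>M)"
      by (simp add: nn_integral_cmult_indicator mult.commute)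
  qed
  also have "\<dots> = (\<integral>\<^sup>+\<omega>. \<integral>\<^sup>+t. indicator S (t, \<omega>) \<partial>lborel \<partial>M)"
    by (rule Fubini'[symmetric]) simp
  also have "\<dots> = (\<integral>\<^sup>+\<omega>\<in>E. ennreal (min (x \<omega>) b) \<partial>M)"
  proof (intro nn_integral_cong)
    fix \<omega>
    have "{0..b} \<inter> {..<x \<omega>} = (if x \<omega> \<le> b then {0..<x \<omega>} else {0..b})"
      by auto
    then have "emeasure lborel ({0..b} \<inter> {..<x \<omega>}) = ennreal (min (x \<omega>) b)"
      using x_nonneg[of \<omega>] by (simp add: emeasure_lborel_Icc_eq min_def ennreal_neg)
    moreover have "(\<lambda>t. indicator S (t, \<omega>) :: ennreal) = (\<lambda>t. indicator E \<omega> * indicator ({0..b} \<inter> {..<x \<omega>}) t)"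
      by (auto simp: S_def split: split_indicator)
    ultimately show "(\<integral>\<^sup>+t. indicator S (t, \<omega>) \<partial>lborel) = ennreal (min (x \<omega>) b) * indicator E \<omega>"
      by (simp add: nn_integral_cmult_indicator mult.commute)
  qed
  finally show ?thesis .
qed

lemma (in finite_measure) measure_Int_mult_le_of_indep:
  assumes [measurable]: "A \<in> sets M" "X \<in> sets M" "Y \<in> sets M" "L \<in> sets M"
    and indep: "measure M (A \<inter> X \<inter> Y) * measure M A = measure M (A \<inter> X) * measure M (A \<inter> Y)"
    and "L \<subseteq> A" "L \<inter> X \<subseteq> Y" "A \<inter> Y - X \<subseteq> L"
  shows "measure M (L \<inter> X) * measure M A \<le> measure M (A \<inter> X) * measure M L"
proof -
  define a j s where "a = measure M (L \<inter> X)" and "j = measure M (A \<inter> X \<inter> Y)"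
    and "s = measure M (A \<inter> X)"
  have "a \<le> j"
    unfolding a_def j_def using assms by (intro finite_measure_mono) auto
  have "s \<le> measure M A"
    unfolding s_def by (intro finite_measure_mono) auto
  have "measure M (A \<inter> Y) - j = measure M (A \<inter> Y - X)"
    unfolding j_def by (subst finite_measure_Diff[symmetric]) (auto intro: arg_cong[where f="measure M"])
  also have "\<dots> \<le> measure M (L - X)"
    using assms by (intro finite_measure_mono) auto
  finally have "measure M (A \<inter> Y) - j \<le> measure M (L - X)" .
  moreover have "measure M L = a + measure M (L - X)"
    unfolding a_def by (subst finite_measure_Union[symmetric]) (auto intro: arg_cong[where f="measure M"])
  moreover have "a * (measure M A - s) \<le> j * (measure M A - s)"
    using \<open>a \<le> j\<close> \<open>s \<le> measure M A\<close> by (intro mult_right_mono) auto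
  moreover have "s * (measure M (A \<inter> Y) - j) \<le> s * measure M (L - X)"
    using \<open>measure M (A \<inter> Y) - j \<le> measure M (L - X)\<close> by (intro mult_left_mono) (auto simp: s_def)
  \<comment> \<open>independence turns \<open>j * (measure M A - s)\<close> into \<open>s * (measure M (A \<inter> Y) - j)\<close>\<close>
  ultimately show ?thesis
    using indep unfolding a_def[symmetric] j_def[symmetric] s_def[symmetric]
    by (simp add: algebra_simps)
qed

lemma (in finite_measure) bdd_below_null_tails:
  fixes f :: "'a \<Rightarrow> ereal"
  assumes [measurable]: "f \<in> borel_measurable M"
    and pos: "measure M {\<omega>\<in>space M. -\<infinity> < f \<omega>} \<noteq> 0"
  shows "bdd_below {t::real. measure M {\<omega>\<in>space M. ereal t < f \<omega>} = 0}"
proof -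
  have cover: "{\<omega>\<in>space M. -\<infinity> < f \<omega>} \<subseteq> (\<Union>n::nat. {\<omega>\<in>space M. ereal (- real n) < f \<omega>})"
  proof
    fix \<omega> assume \<omega>: "\<omega> \<in> {\<omega>\<in>space M. -\<infinity> < f \<omega>}"
    obtain n :: nat where "- real_of_ereal (f \<omega>) < real n"
      using reals_Archimedean2 by blast
    with \<omega> have "ereal (- real n) < f \<omega>"
      by (cases "f \<omega>") auto
    with \<omega> show "\<omega> \<in> (\<Union>n. {\<omega>\<in>space M. ereal (- real n) < f \<omega>})"
      by blast
  qed
  have "\<exists>n::nat. measure M {\<omega>\<in>space M. ereal (- real n) < f \<omega>} \<noteq> 0"
  proof (rule ccontr)
    assume "\<not> ?thesis"
    then have "(\<Union>n::nat. {\<omega>\<in>space M. ereal (- real n) < f \<omega>}) \<in> null_sets M"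
      by (intro null_sets_UN) (simp add: null_sets_def emeasure_eq_measure)
    then have "{\<omega>\<in>space M. -\<infinity> < f \<omega>} \<in> null_sets M"
      by (rule null_sets_subset[OF _ _ cover]) measurable
    with pos show False
      by (simp add: measure_eq_0_null_sets)
  qed
  then obtain n :: nat where n: "measure M {\<omega>\<in>space M. ereal (- real n) < f \<omega>} \<noteq> 0" ..
  show ?thesis
  proof (rule bdd_belowI)
    fix t assume t: "t \<in> {t::real. measure M {\<omega>\<in>space M. ereal t < f \<omega>} = 0}"
    show "- real n \<le> t"
    proof (rule ccontr)
      assume "\<not> - real n \<le> t"
      then have "measure M {\<omega>\<in>space M. ereal (- real n) < f \<omega>} \<le> measure M {\<omega>\<in>space M. ereal t < f \<omega>}"
        by (intro finite_measure_mono) (auto intro: order.strict_trans[of "ereal t" "ereal (- real n)"])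
      then show False
        using t n by (simp add: measure_le_0_iff)
    qed
  qed
qed

lemma (in finite_measure) AE_le_Inf_null_tails:
  fixes f :: "'a \<Rightarrow> ereal"
  assumes [measurable]: "f \<in> borel_measurable M"
    and "measure M {\<omega>\<in>space M. -\<infinity> < f \<omega>} \<noteq> 0"
    and "\<exists>t::real. measure M {\<omega>\<in>space M. ereal t < f \<omega>} = 0"
  shows "AE \<omega> in M. f \<omega> \<le> ereal (Inf {t. measure M {\<omega>\<in>space M. ereal t < f \<omega>} = 0})"
proof -
  define Z where "Z = {t::real. measure M {\<omega>\<in>space M. ereal t < f \<omega>} = 0}"
  have "esssup M f \<le> ereal z" if "z \<in> Z" for z
    using that unfolding esssup_eq[OF assms(1)] Z_def
    by (intro Inf_lower) (simp add: emeasure_eq_measure)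
  then have "esssup M f \<le> (INF z\<in>Z. ereal z)"
    by (rule INF_greatest)
  also have "\<dots> = ereal (Inf Z)"
    using bdd_below_null_tails[OF assms(1,2)] assms(3) unfolding Z_def by (simp add: ereal_Inf')
  finally show ?thesis
    using esssup_AE[where M=M and f=f] unfolding Z_def by (auto elim: eventually_mono)
qed

locale changepoint_detection = prob_space M
  for M :: "'a measure" +
  fixes nu tau :: "'a \<Rightarrow> enat" and T :: "'a \<Rightarrow> nat"
  assumes nu_measurable[measurable]: "nu \<in> M \<rightarrow>\<^sub>M count_space UNIV"
    and tau_measurable[measurable]: "tau \<in> M \<rightarrow>\<^sub>M count_space UNIV"
    and T_measurable[measurable]: "T \<in> M \<rightarrow>\<^sub>M count_space UNIV"
    and prob_detected_pos: "0 < measure M (cp_event M (condA nu tau))"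
    and ADD_finite: "ADD_enn M nu tau < \<infinity>"
begin

abbreviation detected :: "'a set" where
  "detected \<equiv> cp_event M (condA nu tau)"

text \<open>\<open>the_enat \<infinity>\<close> is unspecified, so \<open>delay\<close> is meaningful only where \<open>dtau\<close> is finite;
  on \<open>detected\<close> this holds almost surely (\<open>AE_detected_dtau_finite\<close>).\<close>

definition delay :: "'a \<Rightarrow> real" where
  "delay \<omega> = real (the_enat (dtau nu tau \<omega>))"

lemma dtau_measurable[measurable]: "dtau nu tau \<in> M \<rightarrow>\<^sub>M count_space UNIV"
  unfolding dtau_def[abs_def] by (rule measurable_compose_countable2[OF tau_measurable nu_measurable]) simp

lemma dT_measurable[measurable]: "dT nu T \<in> M \<rightarrow>\<^sub>M count_space UNIV"
  unfolding dT_def[abs_def] by (rule measurable_compose_countable2[OF T_measurable nu_measurable]) simp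

lemma condA_measurable[measurable]: "Measurable.pred M (condA nu tau)"
  unfolding condA_def[abs_def] by (rule measurable_compose_countable2[OF nu_measurable tau_measurable]) simp

lemma delay_measurable[measurable]: "delay \<in> borel_measurable M"
  unfolding delay_def[abs_def] by (rule measurable_compose[OF dtau_measurable]) simp

lemma AE_detected_dtau_finite: "AE \<omega> in M. \<omega> \<in> detected \<longrightarrow> dtau nu tau \<omega> \<noteq> \<infinity>"
proof -
  have "emeasure M detected = ennreal (measure M detected)"
    by (simp add: emeasure_eq_measure)
  then have "(\<integral>\<^sup>+\<omega>. indicator detected \<omega> * ennreal_of_enat (dtau nu tau \<omega>) \<partial>M) \<noteq> \<infinity>"
    using ADD_finite prob_detected_pos by (auto simp: ADD_enn_def ennreal_top_divide)
  then have "AE \<omega> in M. indicator detected \<omega> * ennreal_of_enat (dtau nu tau \<omega>) \<noteq> \<infinity>"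
    by (intro nn_integral_PInf_AE) measurable
  then show ?thesis
    by eventually_elim (metis ennreal_of_enat_infty indicator_simps(1) mult_1)
qed

lemma ADD_enn_eq: "ADD_enn M nu tau = (\<integral>\<^sup>+\<omega>\<in>detected. ennreal (delay \<omega>) \<partial>M) / emeasure M detected"
proof -
  have "(\<integral>\<^sup>+\<omega>. indicator detected \<omega> * ennreal_of_enat (dtau nu tau \<omega>) \<partial>M)
      = (\<integral>\<^sup>+\<omega>\<in>detected. ennreal (delay \<omega>) \<partial>M)"
    using AE_detected_dtau_finite
    by (intro nn_integral_cong_AE, eventually_elim)
      (auto simp: delay_def indicator_def ennreal_of_nat_eq_real_of_nat)
  then show ?thesis
    by (simp add: ADD_enn_def)
qed

lemma nn_integral_delay_finite: "(\<integral>\<^sup>+\<omega>\<in>detected. ennreal (delay \<omega>) \<partial>M) < \<infinity>"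
proof -
  have "ADD_enn M nu tau = (\<integral>\<^sup>+\<omega>\<in>detected. ennreal (delay \<omega>) \<partial>M) / ennreal (measure M detected)"
    by (simp add: ADD_enn_eq emeasure_eq_measure)
  then show ?thesis
    using ADD_finite by (cases "(\<integral>\<^sup>+\<omega>\<in>detected. ennreal (delay \<omega>) \<partial>M) = \<top>")
      (simp_all add: ennreal_top_divide top.not_eq_extremum)
qed

lemma M_inf_eq: "M_inf M nu tau = enn2real (\<integral>\<^sup>+\<omega>\<in>detected. ennreal (delay \<omega>) \<partial>M) / measure M detected"
proof -
  obtain I where I: "(\<integral>\<^sup>+\<omega>\<in>detected. ennreal (delay \<omega>) \<partial>M) = ennreal I" "0 \<le> I"
    using nn_integral_delay_finite by (cases "\<integral>\<^sup>+\<omega>\<in>detected. ennreal (delay \<omega>) \<partial>M") auto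
  then show ?thesis
    using prob_detected_pos by (simp add: M_inf_def ADD_enn_eq emeasure_eq_measure divide_ennreal)
qed

definition delay_tail :: "real \<Rightarrow> real" where
  "delay_tail t = measure M {\<omega>\<in>detected. t < delay \<omega>}"

lemma delay_tail_measurable[measurable]: "delay_tail \<in> borel_measurable borel"
  by (rule borel_measurable_antimono) (auto simp: antimono_def delay_tail_def intro!: finite_measure_mono)

lemma S_ADD_eq: "S_ADD M nu tau t = delay_tail t / measure M detected"
proof -
  have "measure M (cp_event M (\<lambda>\<omega>. condA nu tau \<omega> \<and> (dtau nu tau \<omega> = \<infinity> \<or> t < real (the_enat (dtau nu tau \<omega>)))))
      = delay_tail t"
    unfolding delay_tail_def using AE_detected_dtau_finite
    by (intro measure_eq_AE) (auto simp: cp_event_def delay_def elim!: eventually_mono)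
  then show ?thesis
    by (simp add: S_ADD_def cprob_def)
qed

lemma nn_integral_delay_tail:
  "(\<integral>\<^sup>+t\<in>{0..b}. ennreal (delay_tail t) \<partial>lborel) = (\<integral>\<^sup>+\<omega>\<in>detected. ennreal (min (delay \<omega>) b) \<partial>M)"
  unfolding delay_tail_def emeasure_eq_measure[symmetric]
  by (rule layer_cake_min) (auto simp: delay_def)

lemma M_KM_eq:
  "M_KM M nu tau T = enn2real (\<integral>\<^sup>+\<omega>\<in>detected. ennreal (min (delay \<omega>) (dT_max M nu T)) \<partial>M) / measure M detected"
proof -
  have "M_KM M nu tau T = (LINT t:{0..dT_max M nu T}|lborel. delay_tail t) / measure M detected"
    by (simp add: M_KM_def S_ADD_eq)
  also have "(LINT t:{0..dT_max M nu T}|lborel. delay_tail t)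
      = enn2real (\<integral>\<^sup>+t\<in>{0..dT_max M nu T}. ennreal (delay_tail t) \<partial>lborel)"
    by (rule set_integral_eq_enn2real_set_nn_integral) (measurable, auto simp: delay_tail_def)
  also have "\<dots> = enn2real (\<integral>\<^sup>+\<omega>\<in>detected. ennreal (min (delay \<omega>) (dT_max M nu T)) \<partial>M)"
    by (simp only: nn_integral_delay_tail)
  finally show ?thesis .
qed

lemma nn_integral_min_delay_le:
  "(\<integral>\<^sup>+\<omega>\<in>detected. ennreal (min (delay \<omega>) b) \<partial>M) \<le> (\<integral>\<^sup>+\<omega>\<in>detected. ennreal (delay \<omega>) \<partial>M)"
  by (intro nn_integral_mono) (auto intro: ennreal_leI split: split_indicator)

lemma M_KM_le_M_inf: "M_KM M nu tau T \<le> M_inf M nu tau"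
  unfolding M_KM_eq M_inf_eq
  using nn_integral_delay_finite nn_integral_min_delay_le prob_detected_pos
  by (intro divide_right_mono enn2real_mono) auto

abbreviation detected_in_sequence :: "'a set" where
  "detected_in_sequence \<equiv> cp_event M (condLB nu tau T)"

lemma condLB_measurable[measurable]: "Measurable.pred M (condLB nu tau T)"
  unfolding condLB_def[abs_def] by measurable

lemma M_LB_eq:
  "M_LB M nu tau T = enn2real (\<integral>\<^sup>+\<omega>\<in>detected_in_sequence. ennreal (delay \<omega>) \<partial>M) / measure M detected_in_sequence"
  unfolding M_LB_def delay_def[symmetric]
  by (subst set_integral_eq_enn2real_set_nn_integral) (auto simp: delay_def)

end

locale censored_changepoint_detection = changepoint_detection +
  assumes censoring_indep: "\<And>X Y. cprob M (condA nu tau) (\<lambda>\<omega>. dtau nu tau \<omega> \<in> X \<and> dT nu T \<omega> \<in> Y)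
      = cprob M (condA nu tau) (\<lambda>\<omega>. dtau nu tau \<omega> \<in> X) * cprob M (condA nu tau) (\<lambda>\<omega>. dT nu T \<omega> \<in> Y)"
    and dT_ess_bounded: "\<exists>t::real. measure M (cp_event M (\<lambda>\<omega>. nu \<omega> \<noteq> \<infinity> \<and> t < real_of_int (dT nu T \<omega>))) = 0"
begin

text \<open>\<open>\<Delta>T\<close> as an extended real, \<open>-\<infinity>\<close> when there is no change, so that \<open>dT_max\<close> is its
  essential supremum.\<close>

definition horizon :: "'a \<Rightarrow> ereal" where
  "horizon \<omega> = (if nu \<omega> = \<infinity> then -\<infinity> else ereal (real_of_int (dT nu T \<omega>)))"

lemma horizon_measurable[measurable]: "horizon \<in> borel_measurable M"
  unfolding horizon_def[abs_def] by measurable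

lemma AE_horizon_le_dT_max: "AE \<omega> in M. horizon \<omega> \<le> ereal (dT_max M nu T)"
proof -
  have tail_eq: "{\<omega>\<in>space M. ereal t < horizon \<omega>} = cp_event M (\<lambda>\<omega>. nu \<omega> \<noteq> \<infinity> \<and> t < real_of_int (dT nu T \<omega>))" for t
    by (auto simp: horizon_def cp_event_def)
  have "measure M detected \<le> measure M {\<omega>\<in>space M. -\<infinity> < horizon \<omega>}"
    by (intro finite_measure_mono) (auto simp: horizon_def cp_event_def condA_def)
  then have "measure M {\<omega>\<in>space M. -\<infinity> < horizon \<omega>} \<noteq> 0"
    using prob_detected_pos by linarith
  from AE_le_Inf_null_tails[OF horizon_measurable this] dT_ess_bounded
  show ?thesis
    unfolding tail_eq dT_max_def by simp
qed

lemma AE_delay_le_dT_max: "AE \<omega> in M. \<omega> \<in> detected_in_sequence \<longrightarrow> delay \<omega> \<le> dT_max M nu T"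
  using AE_horizon_le_dT_max
proof eventually_elim
  case (elim \<omega>)
  show ?case
  proof
    assume "\<omega> \<in> detected_in_sequence"
    then have "nu \<omega> \<noteq> \<infinity>" "delay \<omega> \<le> real_of_int (dT nu T \<omega>)"
      by (auto simp: cp_event_def condLB_def condA_def delay_def)
    with elim show "delay \<omega> \<le> dT_max M nu T"
      by (simp add: horizon_def)
  qed
qed

lemma measure_tail_in_sequence_le:
  "measure M {\<omega>\<in>detected_in_sequence. t < delay \<omega>} * measure M detected
     \<le> delay_tail t * measure M detected_in_sequence"
proof -
  define Xt where "Xt = {e. e = \<infinity> \<or> t < real (the_enat e)}"
  define Yt where "Yt = {y. t < real_of_int y}"
  define X where "X = cp_event M (\<lambda>\<omega>. dtau nu tau \<omega> \<in> Xt)"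
  define Y where "Y = cp_event M (\<lambda>\<omega>. dT nu T \<omega> \<in> Yt)"
  have [measurable]: "X \<in> sets M" "Y \<in> sets M"
    unfolding X_def Y_def by measurable
  have "measure M (detected \<inter> X \<inter> Y) * measure M detected = measure M (detected \<inter> X) * measure M (detected \<inter> Y)"
    using censoring_indep[of Xt Yt] prob_detected_pos
    by (simp add: cprob_def cp_event_conj X_def Y_def Int_assoc field_simps)
  moreover have "detected_in_sequence \<inter> X = {\<omega>\<in>detected_in_sequence. t < delay \<omega>}"
    by (auto simp: X_def Xt_def cp_event_def condLB_def delay_def)
  moreover have "measure M (detected \<inter> X) = delay_tail t"
    unfolding delay_tail_def using AE_detected_dtau_finite
    by (intro measure_eq_AE) (auto simp: X_def Xt_def cp_event_def delay_def elim!: eventually_mono)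
  moreover have "detected_in_sequence \<inter> X \<subseteq> Y" "detected \<inter> Y - X \<subseteq> detected_in_sequence"
    by (auto simp: X_def Xt_def Y_def Yt_def cp_event_def condLB_def)
  moreover have "detected_in_sequence \<subseteq> detected"
    by (auto simp: cp_event_def condLB_def)
  ultimately show ?thesis
    using measure_Int_mult_le_of_indep[of detected X Y detected_in_sequence] by simp
qed

lemma nn_integral_delay_in_sequence_le:
  "(\<integral>\<^sup>+\<omega>\<in>detected_in_sequence. ennreal (delay \<omega>) \<partial>M)
     \<le> ennreal (measure M detected_in_sequence / measure M detected)
         * (\<integral>\<^sup>+\<omega>\<in>detected. ennreal (min (delay \<omega>) (dT_max M nu T)) \<partial>M)"
    (is "_ \<le> ennreal (?p / ?\<mu>) * _")
proof -
  let ?b = "dT_max M nu T"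
  have "(\<integral>\<^sup>+\<omega>\<in>detected_in_sequence. ennreal (delay \<omega>) \<partial>M)
      = (\<integral>\<^sup>+\<omega>\<in>detected_in_sequence. ennreal (min (delay \<omega>) ?b) \<partial>M)"
  proof (rule nn_integral_cong_AE)
    show "AE \<omega> in M. ennreal (delay \<omega>) * indicator detected_in_sequence \<omega>
        = ennreal (min (delay \<omega>) ?b) * indicator detected_in_sequence \<omega>"
      using AE_delay_le_dT_max by eventually_elim (simp split: split_indicator)
  qed
  also have "\<dots> = (\<integral>\<^sup>+t\<in>{0..?b}. emeasure M {\<omega>\<in>detected_in_sequence. t < delay \<omega>} \<partial>lborel)"
    by (rule layer_cake_min[symmetric]) (auto simp: delay_def)
  also have "\<dots> \<le> (\<integral>\<^sup>+t\<in>{0..?b}. ennreal (?p / ?\<mu>) * ennreal (delay_tail t) \<partial>lborel)"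
  proof (intro nn_integral_mono)
    fix t
    have "measure M {\<omega>\<in>detected_in_sequence. t < delay \<omega>} \<le> ?p / ?\<mu> * delay_tail t"
      using measure_tail_in_sequence_le[of t] prob_detected_pos by (simp add: field_simps)
    moreover have "0 \<le> ?p / ?\<mu>" "0 \<le> delay_tail t"
      by (simp_all add: delay_tail_def)
    ultimately have "emeasure M {\<omega>\<in>detected_in_sequence. t < delay \<omega>} \<le> ennreal (?p / ?\<mu>) * ennreal (delay_tail t)"
      by (simp add: emeasure_eq_measure ennreal_mult[symmetric] ennreal_leI)
    then show "emeasure M {\<omega>\<in>detected_in_sequence. t < delay \<omega>} * indicator {0..?b} t
        \<le> ennreal (?p / ?\<mu>) * ennreal (delay_tail t) * indicator {0..?b} t"
      by (simp split: split_indicator)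
  qed
  also have "\<dots> = ennreal (?p / ?\<mu>) * (\<integral>\<^sup>+\<omega>\<in>detected. ennreal (min (delay \<omega>) ?b) \<partial>M)"
    unfolding nn_integral_delay_tail[symmetric] mult.assoc
    by (rule nn_integral_cmult) simp
  finally show ?thesis .
qed

lemma M_LB_le_M_KM: "M_LB M nu tau T \<le> M_KM M nu tau T"
proof -
  define p where "p = measure M detected_in_sequence"
  define \<mu> where "\<mu> = measure M detected"
  define K where "K = (\<integral>\<^sup>+\<omega>\<in>detected. ennreal (min (delay \<omega>) (dT_max M nu T)) \<partial>M)"
  have "\<mu> > 0" "p \<ge> 0"
    unfolding \<mu>_def p_def by (simp_all add: prob_detected_pos)
  have "K < \<infinity>"
    unfolding K_def using nn_integral_min_delay_le nn_integral_delay_finite by (rule le_less_trans)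
  then have "enn2real (\<integral>\<^sup>+\<omega>\<in>detected_in_sequence. ennreal (delay \<omega>) \<partial>M)
      \<le> enn2real (ennreal (p / \<mu>) * K)"
    using nn_integral_delay_in_sequence_le unfolding K_def[symmetric] p_def[symmetric] \<mu>_def[symmetric]
    by (intro enn2real_mono) (auto simp: ennreal_mult_less_top)
  also have "\<dots> = p / \<mu> * enn2real K"
    using \<open>\<mu> > 0\<close> \<open>p \<ge> 0\<close> by (simp add: enn2real_mult)
  finally have "enn2real (\<integral>\<^sup>+\<omega>\<in>detected_in_sequence. ennreal (delay \<omega>) \<partial>M) / p \<le> enn2real K / \<mu>"
    using \<open>\<mu> > 0\<close> \<open>p \<ge> 0\<close> by (cases "p = 0") (simp_all add: field_simps)
  then show ?thesis
    unfolding M_LB_eq M_KM_eq K_def[symmetric] p_def[symmetric] \<mu>_def[symmetric] .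
qed

end

theorem theorem4p4:
  fixes M :: "'a measure" and nu tau :: "'a \<Rightarrow> enat" and T :: "'a \<Rightarrow> nat"
  assumes "prob_space M"
    and "nu \<in> measurable M (count_space UNIV)"
    and "tau \<in> measurable M (count_space UNIV)"
    and "T \<in> measurable M (count_space UNIV)"
    and "measure M (cp_event M (condA nu tau)) > 0"
    and indep: "\<And>X Y. cprob M (condA nu tau) (\<lambda>\<omega>. dtau nu tau \<omega> \<in> X \<and> dT nu T \<omega> \<in> Y)
                 = cprob M (condA nu tau) (\<lambda>\<omega>. dtau nu tau \<omega> \<in> X)
                   * cprob M (condA nu tau) (\<lambda>\<omega>. dT nu T \<omega> \<in> Y)"
    and "ADD_enn M nu tau < \<infinity>"
    and "\<exists>t::real. prob_space.prob M
           (cp_event M (\<lambda>\<omega>. nu \<omega> \<noteq> \<infinity> \<and> t < real_of_int (dT nu T \<omega>))) = 0"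
  shows "bias_LB M nu tau T \<le> bias_KM M nu tau T \<and> bias_KM M nu tau T \<le> 0"
proof -
  interpret censored_changepoint_detection M nu tau T
    by (intro censored_changepoint_detection.intro changepoint_detection.intro
        changepoint_detection_axioms.intro censored_changepoint_detection_axioms.intro) (fact assms)+
  show ?thesis
    using M_LB_le_M_KM M_KM_le_M_inf by (simp add: bias_LB_def bias_KM_def)
qed

end
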